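(* Let $m,T\in\mathbb{N}$, $A=(a_{i,t})\in\mathbb{R}^{m\times T}$ with $a_{i,T}\neq0$ for all $i$, $b\in\mathbb{R}^m$, $\lambda>1$ and $\beta>0$. Let $H_t=[-t\sqrt{2\log\lambda},t\sqrt{2\log\lambda}]^m$ for $t\in\{0,\dots,T\}$, let $\Gamma_t$ be a $\beta$-partition of $H_t$ with projection $p_t:H_t\to\Gamma_t$, let $Q_t(B\mid x)=\int\mathbb{1}_B(x+A_{\cdot,t+1}y)\frac{1}{\sqrt{2\pi}}e^{-y^2/2}dy$, and define $\hat Q_t(y\mid x)=Q_t(p_{t+1}^{-1}(y)\mid x)$ for $x\in\Gamma_t,y\in\Gamma_{t+1}$. Define $\hat J_T(x)=g_{\lambda,b}(x)$ for $x\in\Gamma_T$ and $\hat J_t(x)=\sum_{y\in\Gamma_{t+1}}\hat J_{t+1}(y)\hat Q_t(y\mid x)$ for $x\in\Gamma_t$, $t=T-1,\dots,0$. Then with $x_0=0\in\mathbb{R}^m$ (note $\Gamma_0=H_0=\{0\}$) and $\mathcal{P}=\{x\in\mathbb{R}^T:Ax<b\}$, $$\Big|\int_{\mathcal{P}}\phi(x)\,dx-\hat J_0(x_0)\Big|\le\frac{2m}{\lambda\min_i|a_{i,T}|}+\frac{\sqrt2\,mT\max_{i,t}|a_{i,t}|}{\sqrt{\log\lambda}}\Big(\frac1\lambda\Big)^{1/\max_{i,t}a_{i,t}^2}+2m\lambda\beta(T+1),$$ where $\phi$ is the standard normal density on $\mathbb{R}^T$.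
   Context: $A_{\cdot,t+1}$ is the $(t+1)$-st column of $A$; inequalities between vectors are componentwise. For a compact metric space $H$, a finite set $\Gamma=\{x_1,\dots,x_n\}$ is a $\beta$-partition if there are disjoint sets $X_1,\dots,X_n$ with $\bigcup X_i=H$, $x_i\in X_i$, and $\|x-x_i\|_2\le\beta$ for all $x\in X_i$; the projection $p:H\to\Gamma$ is $p(x)=x_i$ for $x\in X_i$, and $p^{-1}(y)$ is the preimage. The smoothed indicator is $g_{\lambda,b}(x)=\prod_{i=1}^m g_i(x)$ with $g_i(x)=1$ if $x_i\le b_i-1/\lambda$, $g_i(x)=-\lambda(x_i-b_i)$ if $b_i-1/\lambda<x_i<b_i$, $g_i(x)=0$ if $x_i\ge b_i$. *)

theory Defs
  imports "HOL-Analysis.Analysis" "HOL-Probability.Probability"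
begin

text \<open>Vectors in R^m are modelled as real^'m (so m = CARD('m)); the matrix A is a
function A i t with row index i :: 'm and 0-based column index t < T, i.e. the
paper's column t+1 is A i t and the paper's a_{i,T} is A i (T-1).\<close>

definition column :: "('m::finite \<Rightarrow> nat \<Rightarrow> real) \<Rightarrow> nat \<Rightarrow> real^'m" where
  "column A t = (\<chi> i. A i t)"

definition Hbox :: "real \<Rightarrow> nat \<Rightarrow> (real^'m::finite) set" where
  "Hbox lam t = {x. \<forall>i. \<bar>x $ i\<bar> \<le> real t * sqrt (2 * ln lam)}"

definition beta_partition ::
  "(real^'m::finite) set \<Rightarrow> real \<Rightarrow> (real^'m) set \<Rightarrow> (real^'m \<Rightarrow> (real^'m) set) \<Rightarrow> bool" where
  "beta_partition H beta Gam X \<longleftrightarrow>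
     finite Gam \<and>
     (\<forall>y\<in>Gam. y \<in> X y) \<and>
     (\<forall>y\<in>Gam. \<forall>z\<in>Gam. y \<noteq> z \<longrightarrow> X y \<inter> X z = {}) \<and>
     (\<Union>y\<in>Gam. X y) = H \<and>
     (\<forall>y\<in>Gam. \<forall>x\<in>X y. norm (x - y) \<le> beta)"

definition partition_proj ::
  "(real^'m::finite) set \<Rightarrow> (real^'m \<Rightarrow> (real^'m) set) \<Rightarrow> real^'m \<Rightarrow> real^'m" where
  "partition_proj Gam X x = (THE y. y \<in> Gam \<and> x \<in> X y)"

definition proj_preimage ::
  "(real^'m::finite) set \<Rightarrow> (real^'m) set \<Rightarrow> (real^'m \<Rightarrow> (real^'m) set) \<Rightarrow> real^'m \<Rightarrow> (real^'m) set" where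
  "proj_preimage H Gam X y = {x \<in> H. partition_proj Gam X x = y}"

definition Qker :: "('m::finite \<Rightarrow> nat \<Rightarrow> real) \<Rightarrow> nat \<Rightarrow> (real^'m) set \<Rightarrow> real^'m \<Rightarrow> real" where
  "Qker A t B x = (\<integral>y. indicator B (x + y *\<^sub>R column A t) * std_normal_density y \<partial>lborel)"

definition gcomp :: "real \<Rightarrow> real \<Rightarrow> real \<Rightarrow> real" where
  "gcomp lam bi xi =
     (if xi \<le> bi - 1 / lam then 1 else if xi < bi then - lam * (xi - bi) else 0)"

definition gsmooth :: "real \<Rightarrow> real^'m::finite \<Rightarrow> real^'m \<Rightarrow> real" where
  "gsmooth lam b x = (\<Prod>i\<in>UNIV. gcomp lam (b $ i) (x $ i))"

definition std_normal_density_T :: "nat \<Rightarrow> (nat \<Rightarrow> real) \<Rightarrow> real" where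
  "std_normal_density_T T x = (\<Prod>t<T. std_normal_density (x t))"

definition polyhedron :: "('m::finite \<Rightarrow> nat \<Rightarrow> real) \<Rightarrow> real^'m \<Rightarrow> nat \<Rightarrow> (nat \<Rightarrow> real) set" where
  "polyhedron A b T = {x. \<forall>i. (\<Sum>t<T. A i t * x t) < b $ i}"

end

theory Submission
  imports Defs
begin

text \<open>By Fubini, the Gaussian integral over the polyhedron is the composition of the
one-dimensional kernels h \<mapsto> (x \<mapsto> E h (x + s a_t)), a_t the t-th column of A, applied to the
indicator of the orthant {z. z < b} and evaluated at 0; Q_t is the same kernel applied to
indicators. Replacing the orthant indicator by the smoothed indicator g costs at most
m / (lambda min_i |a_{i,T}|): the two differ only on m strips of width 1/lambda, each of which
the last kernel charges with at most 1/(lambda |a_{i,T}|). The smoothed problem is then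
discretised backwards in time. The iterates of g stay in [0,1] and are (m lambda)-Lipschitz,
so replacing them on a cell of a beta-partition by the value at its centre costs m lambda beta
per step, while leaving the box H_{t+1} from H_t needs a Gaussian step larger than
r = sqrt (2 log lambda) / max |a_{i,t}|, which has probability at most 2 phi(r)/r. The factors
2 and T+1 in the stated bound are slack for this argument.\<close>

definition gauss_kernel :: "real^'m::finite \<Rightarrow> (real^'m \<Rightarrow> real) \<Rightarrow> real^'m \<Rightarrow> real" where
  "gauss_kernel a h x = (\<integral>s. h (x + s *\<^sub>R a) * std_normal_density s \<partial>lborel)"

lemma Qker_eq_gauss_kernel: "Qker A t B = gauss_kernel (column A t) (indicator B)"
  by (simp add: Qker_def gauss_kernel_def fun_eq_iff)

lemma integrable_gauss_kernel:
  fixes h :: "real^'m::finite \<Rightarrow> real"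
  assumes [measurable]: "h \<in> borel_measurable borel" and hb: "\<And>z. \<bar>h z\<bar> \<le> C"
  shows "integrable lborel (\<lambda>s. h (x + s *\<^sub>R a) * std_normal_density s)"
proof (rule Bochner_Integration.integrable_bound[of _ "\<lambda>s. C * std_normal_density s"])
  show "integrable lborel (\<lambda>s. C * std_normal_density s)" by simp
  show "AE s in lborel. norm (h (x + s *\<^sub>R a) * std_normal_density s) \<le> norm (C * std_normal_density s)"
  proof (intro AE_I2)
    fix s
    have "\<bar>h (x + s *\<^sub>R a)\<bar> \<le> \<bar>C\<bar>" using hb[of "x + s *\<^sub>R a"] abs_ge_self[of C] by linarith
    then show "norm (h (x + s *\<^sub>R a) * std_normal_density s) \<le> norm (C * std_normal_density s)"
      by (simp add: abs_mult mult_right_mono)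
  qed
qed measurable

lemma abs_gauss_kernel_le_gauss_kernel:
  fixes h B :: "real^'m::finite \<Rightarrow> real"
  assumes [measurable]: "h \<in> borel_measurable borel" "B \<in> borel_measurable borel"
    and "\<And>z. \<bar>h z\<bar> \<le> C" "\<And>z. \<bar>B z\<bar> \<le> D" and hB: "\<And>z. \<bar>h z\<bar> \<le> B z"
  shows "\<bar>gauss_kernel a h x\<bar> \<le> gauss_kernel a B x"
  unfolding gauss_kernel_def
  using integrable_gauss_kernel[OF assms(1,3)] integrable_gauss_kernel[OF assms(2,4)]
  by (rule integral_abs_bound_integral) (use hB in \<open>simp add: abs_mult mult_right_mono\<close>)

lemma gauss_kernel_const: "gauss_kernel a (\<lambda>_. c) x = c"
  by (simp add: gauss_kernel_def)

lemma abs_gauss_kernel_le: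
  fixes h :: "real^'m::finite \<Rightarrow> real"
  assumes "h \<in> borel_measurable borel" and "\<And>z. \<bar>h z\<bar> \<le> C"
  shows "\<bar>gauss_kernel a h x\<bar> \<le> C"
proof -
  have "\<bar>gauss_kernel a h x\<bar> \<le> gauss_kernel a (\<lambda>_. C) x"
    by (rule abs_gauss_kernel_le_gauss_kernel[where D="\<bar>C\<bar>"]) (use assms in auto)
  then show ?thesis by (simp add: gauss_kernel_const)
qed

lemma gauss_kernel_nonneg:
  fixes h :: "real^'m::finite \<Rightarrow> real"
  assumes "\<And>z. 0 \<le> h z"
  shows "0 \<le> gauss_kernel a h x"
  unfolding gauss_kernel_def using assms by (auto intro!: integral_nonneg_AE)

lemma gauss_kernel_diff:
  fixes h u :: "real^'m::finite \<Rightarrow> real"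
  assumes "h \<in> borel_measurable borel" "u \<in> borel_measurable borel"
    and "\<And>z. \<bar>h z\<bar> \<le> C" "\<And>z. \<bar>u z\<bar> \<le> D"
  shows "gauss_kernel a h x - gauss_kernel a u x = gauss_kernel a (\<lambda>z. h z - u z) x"
  unfolding gauss_kernel_def
  using integrable_gauss_kernel[OF assms(1,3)] integrable_gauss_kernel[OF assms(2,4)]
  by (subst Bochner_Integration.integral_diff[symmetric]) (auto simp: algebra_simps)

lemma gauss_kernel_sum:
  fixes f :: "'i \<Rightarrow> real^'m::finite \<Rightarrow> real"
  assumes "finite I" and "\<And>i. i \<in> I \<Longrightarrow> f i \<in> borel_measurable borel"
    and "\<And>i z. i \<in> I \<Longrightarrow> \<bar>f i z\<bar> \<le> C i"
  shows "gauss_kernel a (\<lambda>w. \<Sum>i\<in>I. f i w) x = (\<Sum>i\<in>I. gauss_kernel a (f i) x)"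
  unfolding gauss_kernel_def sum_distrib_right
  by (rule Bochner_Integration.integral_sum) (use integrable_gauss_kernel[OF assms(2,3)] in auto)

lemma gauss_kernel_cmult: "gauss_kernel a (\<lambda>w. c * f w) x = c * gauss_kernel a f x"
  unfolding gauss_kernel_def by (simp add: mult.assoc)

lemma borel_measurable_gauss_kernel[measurable]:
  fixes h :: "real^'m::finite \<Rightarrow> real"
  assumes [measurable]: "h \<in> borel_measurable borel"
  shows "gauss_kernel a h \<in> borel_measurable borel"
proof -
  have "(\<lambda>p. (fst p + snd p *\<^sub>R a)::real^'m) \<in> borel_measurable (borel \<Otimes>\<^sub>M lborel)"
    by measurable
  then have "(\<lambda>(x, s). h (x + s *\<^sub>R a) * std_normal_density s) \<in> borel_measurable (borel \<Otimes>\<^sub>M lborel)"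
    by (simp add: case_prod_beta') measurable
  then show ?thesis
    unfolding gauss_kernel_def[abs_def] by (rule lborel.borel_measurable_lebesgue_integral)
qed

lemma gauss_kernel_lipschitz:
  fixes h :: "real^'m::finite \<Rightarrow> real"
  assumes [measurable]: "h \<in> borel_measurable borel" and hb: "\<And>z. \<bar>h z\<bar> \<le> C"
    and hl: "\<And>u v. \<bar>h u - h v\<bar> \<le> L * norm (u - v)"
  shows "\<bar>gauss_kernel a h u - gauss_kernel a h v\<bar> \<le> L * norm (u - v)"
proof -
  define d where "d = u - v"
  have [measurable]: "(\<lambda>z. h (z + d)) \<in> borel_measurable borel" by measurable
  have "gauss_kernel a h u = gauss_kernel a (\<lambda>z. h (z + d)) v"
    unfolding gauss_kernel_def d_def by (simp add: algebra_simps)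
  then have "gauss_kernel a h u - gauss_kernel a h v = gauss_kernel a (\<lambda>z. h (z + d) - h z) v"
    using gauss_kernel_diff[of "\<lambda>z. h (z + d)" h C C] hb by simp
  also have "\<bar>\<dots>\<bar> \<le> L * norm d"
  proof (rule abs_gauss_kernel_le)
    fix z show "\<bar>h (z + d) - h z\<bar> \<le> L * norm d" using hl[of "z + d" z] by simp
  qed measurable
  finally show ?thesis by (simp add: d_def)
qed

fun gauss_kernel_iter ::
  "(nat \<Rightarrow> real^'m::finite) \<Rightarrow> nat \<Rightarrow> nat \<Rightarrow> (real^'m \<Rightarrow> real) \<Rightarrow> real^'m \<Rightarrow> real" where
  "gauss_kernel_iter a s 0 h = h"
| "gauss_kernel_iter a s (Suc n) h = gauss_kernel (a s) (gauss_kernel_iter a (Suc s) n h)"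

lemma gauss_kernel_iter_Suc_last:
  "gauss_kernel_iter a s (Suc n) h = gauss_kernel_iter a s n (gauss_kernel (a (s + n)) h)"
  by (induction n arbitrary: s) auto

lemma gauss_kernel_iter_bounded:
  fixes h :: "real^'m::finite \<Rightarrow> real"
  assumes "h \<in> borel_measurable borel" and "\<And>z. \<bar>h z\<bar> \<le> C"
  shows "gauss_kernel_iter a s n h \<in> borel_measurable borel"
    and "\<bar>gauss_kernel_iter a s n h z\<bar> \<le> C"
proof -
  have "gauss_kernel_iter a s n h \<in> borel_measurable borel \<and> (\<forall>z. \<bar>gauss_kernel_iter a s n h z\<bar> \<le> C)"
  proof (induction n arbitrary: s)
    case (Suc n)
    then have m: "gauss_kernel_iter a (Suc s) n h \<in> borel_measurable borel"
      and b: "\<And>z. \<bar>gauss_kernel_iter a (Suc s) n h z\<bar> \<le> C" by auto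
    show ?case using abs_gauss_kernel_le[OF m b] borel_measurable_gauss_kernel[OF m] by simp
  qed (use assms in simp)
  then show "gauss_kernel_iter a s n h \<in> borel_measurable borel" "\<bar>gauss_kernel_iter a s n h z\<bar> \<le> C"
    by auto
qed

lemma gauss_kernel_iter_nonneg:
  fixes h :: "real^'m::finite \<Rightarrow> real"
  assumes "\<And>z. 0 \<le> h z"
  shows "0 \<le> gauss_kernel_iter a s n h z"
  by (induction n arbitrary: s z) (simp_all add: assms gauss_kernel_nonneg)

lemma gauss_kernel_iter_lipschitz:
  fixes h :: "real^'m::finite \<Rightarrow> real"
  assumes "h \<in> borel_measurable borel" and "\<And>z. \<bar>h z\<bar> \<le> C"
    and "\<And>u v. \<bar>h u - h v\<bar> \<le> L * norm (u - v)"
  shows "\<bar>gauss_kernel_iter a s n h u - gauss_kernel_iter a s n h v\<bar> \<le> L * norm (u - v)"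
proof (induction n arbitrary: s u v)
  case (Suc n)
  show ?case
    using gauss_kernel_lipschitz[OF gauss_kernel_iter_bounded[OF assms(1,2)] Suc.IH] by simp
qed (use assms in simp)

lemma gauss_kernel_iter_diff_le:
  fixes h u :: "real^'m::finite \<Rightarrow> real"
  assumes hm: "h \<in> borel_measurable borel" and um: "u \<in> borel_measurable borel"
    and hb: "\<And>z. \<bar>h z\<bar> \<le> C" and ub: "\<And>z. \<bar>u z\<bar> \<le> D"
    and e: "\<And>z. \<bar>h z - u z\<bar> \<le> eps"
  shows "\<bar>gauss_kernel_iter a s n h x - gauss_kernel_iter a s n u x\<bar> \<le> eps"
proof (induction n arbitrary: s x)
  case (Suc n)
  note H = gauss_kernel_iter_bounded[OF hm hb, of a "Suc s" n]
  note U = gauss_kernel_iter_bounded[OF um ub, of a "Suc s" n]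
  have "gauss_kernel_iter a s (Suc n) h x - gauss_kernel_iter a s (Suc n) u x
      = gauss_kernel (a s) (\<lambda>z. gauss_kernel_iter a (Suc s) n h z - gauss_kernel_iter a (Suc s) n u z) x"
    using gauss_kernel_diff[OF H(1) U(1) H(2) U(2)] by simp
  also have "\<bar>\<dots>\<bar> \<le> eps"
    by (rule abs_gauss_kernel_le) (use H(1) U(1) Suc in auto)
  finally show ?case .
qed (use e in simp)

lemma integrable_PiM_std_normal_bounded:
  assumes "finite I" and "F \<in> borel_measurable (PiM I (\<lambda>_. lborel))" and "\<And>y. \<bar>F y\<bar> \<le> C"
  shows "integrable (PiM I (\<lambda>_. lborel)) (\<lambda>y. F y * (\<Prod>t\<in>I. std_normal_density (y t)))"
proof -
  interpret product_sigma_finite "\<lambda>_. lborel :: real measure"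
    by (simp add: product_sigma_finite_def lborel.sigma_finite_measure_axioms)
  have "integrable (PiM I (\<lambda>_. lborel)) (\<lambda>y. C * (\<Prod>t\<in>I. std_normal_density (y t)))"
    using assms(1) by (intro integrable_mult_right product_integrable_prod) auto
  then show ?thesis
  proof (rule Bochner_Integration.integrable_bound)
    show "AE y in PiM I (\<lambda>_. lborel). norm (F y * (\<Prod>t\<in>I. std_normal_density (y t)))
        \<le> norm (C * (\<Prod>t\<in>I. std_normal_density (y t)))"
    proof (intro AE_I2)
      fix y
      have "0 \<le> (\<Prod>t\<in>I. std_normal_density (y t))" by (intro prod_nonneg) auto
      then show "norm (F y * (\<Prod>t\<in>I. std_normal_density (y t)))
          \<le> norm (C * (\<Prod>t\<in>I. std_normal_density (y t)))"
        using assms(3)[of y] by (simp add: abs_mult mult_right_mono order_trans[OF _ abs_ge_self])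
    qed
  qed (use assms(2) in measurable)
qed

lemma integral_PiM_gaussian_eq_gauss_kernel_iter:
  fixes h :: "real^'m::finite \<Rightarrow> real" and a :: "nat \<Rightarrow> real^'m"
  assumes "h \<in> borel_measurable borel" and "\<And>z. \<bar>h z\<bar> \<le> C"
  shows "(\<integral>y. h (x + (\<Sum>t<k. y t *\<^sub>R a t)) * (\<Prod>t<k. std_normal_density (y t))
            \<partial>PiM {..<k} (\<lambda>_. lborel)) = gauss_kernel_iter a 0 k h x"
  using assms
proof (induction k arbitrary: h x C)
  case 0
  then show ?case by (simp add: PiM_empty lebesgue_integral_count_space_finite)
next
  case (Suc k)
  note hm[measurable] = Suc.prems(1)
  interpret product_sigma_finite "\<lambda>_::nat. lborel :: real measure"
    by (simp add: product_sigma_finite_def lborel.sigma_finite_measure_axioms)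
  let ?\<phi> = "\<lambda>k y. \<Prod>t<k. std_normal_density (y t)"
  let ?F = "\<lambda>y. h (x + (\<Sum>t<Suc k. y t *\<^sub>R a t)) * ?\<phi> (Suc k) y"
  have intF: "integrable (PiM {..<Suc k} (\<lambda>_. lborel)) ?F"
    by (rule integrable_PiM_std_normal_bounded) (use Suc.prems(2) in auto)
  have "integral\<^sup>L (PiM {..<Suc k} (\<lambda>_. lborel)) ?F
      = (\<integral>y. (\<integral>z. ?F (y(k := z)) \<partial>lborel) \<partial>PiM {..<k} (\<lambda>_. lborel))"
    using product_integral_insert[of "{..<k}" k ?F] intF lessThan_Suc by simp
  also have "\<dots> = (\<integral>y. gauss_kernel (a k) h (x + (\<Sum>t<k. y t *\<^sub>R a t)) * ?\<phi> k y
                     \<partial>PiM {..<k} (\<lambda>_. lborel))"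
  proof (rule Bochner_Integration.integral_cong[OF refl])
    fix y
    have "?F (y(k := z)) = ?\<phi> k y *
            (h ((x + (\<Sum>t<k. y t *\<^sub>R a t)) + z *\<^sub>R a k) * std_normal_density z)" for z
    proof -
      have "(\<Sum>t<k. (y(k := z)) t *\<^sub>R a t) = (\<Sum>t<k. y t *\<^sub>R a t)"
        and "?\<phi> k (y(k := z)) = ?\<phi> k y" by (auto intro!: sum.cong prod.cong)
      then show ?thesis by (simp add: algebra_simps)
    qed
    then have "(\<integral>z. ?F (y(k := z)) \<partial>lborel) = (\<integral>z. ?\<phi> k y *
            (h ((x + (\<Sum>t<k. y t *\<^sub>R a t)) + z *\<^sub>R a k) * std_normal_density z) \<partial>lborel)"
      by (simp only:)
    also have "\<dots> = ?\<phi> k y * gauss_kernel (a k) h (x + (\<Sum>t<k. y t *\<^sub>R a t))"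
      unfolding gauss_kernel_def by (rule integral_mult_right_zero)
    finally show "(\<integral>z. ?F (y(k := z)) \<partial>lborel)
        = gauss_kernel (a k) h (x + (\<Sum>t<k. y t *\<^sub>R a t)) * ?\<phi> k y"
      by (simp only: mult.commute)
  qed
  also have "\<dots> = gauss_kernel_iter a 0 k (gauss_kernel (a k) h) x"
    by (rule Suc.IH[OF borel_measurable_gauss_kernel[OF hm] abs_gauss_kernel_le[OF hm Suc.prems(2)]])
  also have "\<dots> = gauss_kernel_iter a 0 (Suc k) h x"
    using gauss_kernel_iter_Suc_last[of a 0 k h] by simp
  finally show ?case .
qed

lemma polyhedron_integral_eq_gauss_kernel_iter:
  fixes A :: "'m::finite \<Rightarrow> nat \<Rightarrow> real"
  shows "(\<integral>x. indicator (polyhedron A b T) x * std_normal_density_T T x \<partial>PiM {..<T} (\<lambda>_. lborel))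
       = gauss_kernel_iter (column A) 0 T (indicator {z. \<forall>i. z $ i < b $ i}) 0"
proof -
  have polyhedron_eq: "indicator (polyhedron A b T) y
      = indicator {z. \<forall>i. z $ i < b $ i} (0 + (\<Sum>t<T. y t *\<^sub>R column A t))"
    for y :: "nat \<Rightarrow> real"
    by (simp add: polyhedron_def indicator_def column_def mult.commute)
  have "(\<integral>x. indicator (polyhedron A b T) x * std_normal_density_T T x \<partial>PiM {..<T} (\<lambda>_. lborel))
      = (\<integral>y. indicator {z. \<forall>i. z $ i < b $ i} (0 + (\<Sum>t<T. y t *\<^sub>R column A t))
              * (\<Prod>t<T. std_normal_density (y t)) \<partial>PiM {..<T} (\<lambda>_. lborel))"
    by (intro Bochner_Integration.integral_cong) (simp_all add: polyhedron_eq std_normal_density_T_def)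
  also have "\<dots> = gauss_kernel_iter (column A) 0 T (indicator {z. \<forall>i. z $ i < b $ i}) 0"
    by (rule integral_PiM_gaussian_eq_gauss_kernel_iter[where C=1])
       (auto simp: indicator_def open_halfspace_component_lt_cart)
  finally show ?thesis .
qed

lemma gcomp_eq_clamp: "lam > 0 \<Longrightarrow> gcomp lam bi xi = max 0 (min 1 (lam * (bi - xi)))"
  by (auto simp: gcomp_def field_simps max_def min_def mult_le_0_iff)

lemma gcomp_bounds: "lam > 0 \<Longrightarrow> 0 \<le> gcomp lam bi xi \<and> gcomp lam bi xi \<le> 1"
  by (simp add: gcomp_eq_clamp)

lemma gcomp_lipschitz: "lam > 0 \<Longrightarrow> \<bar>gcomp lam bi u - gcomp lam bi v\<bar> \<le> lam * \<bar>u - v\<bar>"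
proof -
  assume l: "lam > 0"
  have "\<bar>max 0 (min 1 p) - max 0 (min 1 q)\<bar> \<le> \<bar>p - q\<bar>" for p q :: real
    by (simp add: max_def min_def abs_if)
  then have "\<bar>gcomp lam bi u - gcomp lam bi v\<bar> \<le> \<bar>lam * (bi - u) - lam * (bi - v)\<bar>"
    using l by (simp add: gcomp_eq_clamp)
  also have "\<dots> = lam * \<bar>u - v\<bar>" using l by (simp add: right_diff_distrib[symmetric] abs_mult)
  finally show ?thesis .
qed

lemma abs_prod_diff_le_sum:
  fixes f g :: "'a \<Rightarrow> real"
  assumes "finite I" "\<And>i. i \<in> I \<Longrightarrow> 0 \<le> f i \<and> f i \<le> 1 \<and> 0 \<le> g i \<and> g i \<le> 1"
  shows "\<bar>prod f I - prod g I\<bar> \<le> (\<Sum>i\<in>I. \<bar>f i - g i\<bar>)"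
  using assms
proof (induction I rule: finite_induct)
  case (insert i I)
  have F: "0 \<le> prod f I" "prod f I \<le> 1" using insert by (auto intro: prod_nonneg prod_le_1)
  have fi: "0 \<le> f i" "0 \<le> g i" "g i \<le> 1" using insert by auto
  have "\<bar>f i * prod f I - g i * prod g I\<bar>
      = \<bar>(f i - g i) * prod f I + g i * (prod f I - prod g I)\<bar>"
    by (simp add: algebra_simps)
  also have "\<dots> \<le> \<bar>f i - g i\<bar> * prod f I + g i * \<bar>prod f I - prod g I\<bar>"
    by (rule order_trans[OF abs_triangle_ineq]) (use F fi in \<open>simp add: abs_mult\<close>)
  also have "\<dots> \<le> \<bar>f i - g i\<bar> + \<bar>prod f I - prod g I\<bar>"
    using F fi by (intro add_mono mult_left_le mult_left_le_one_le) auto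
  also have "\<dots> \<le> \<bar>f i - g i\<bar> + (\<Sum>i\<in>I. \<bar>f i - g i\<bar>)" using insert by simp
  finally show ?case using insert by simp
qed simp

lemma borel_measurable_gsmooth[measurable]:
  "lam > 0 \<Longrightarrow> gsmooth lam (b::real^'m::finite) \<in> borel_measurable borel"
proof -
  assume "lam > 0"
  then have "gsmooth lam b = (\<lambda>x. \<Prod>i\<in>UNIV. max 0 (min 1 (lam * (b $ i - x $ i))))"
    by (simp add: gsmooth_def gcomp_eq_clamp fun_eq_iff)
  then show ?thesis by simp measurable
qed

lemma gsmooth_bounds: "lam > 0 \<Longrightarrow> 0 \<le> gsmooth lam b x \<and> gsmooth lam b x \<le> 1"
  by (simp add: gsmooth_def gcomp_bounds prod_nonneg prod_le_1)

lemma gsmooth_lipschitz: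
  fixes b :: "real^'m::finite"
  assumes l: "lam > 0"
  shows "\<bar>gsmooth lam b u - gsmooth lam b v\<bar> \<le> (lam * real CARD('m)) * norm (u - v)"
proof -
  have "\<bar>gsmooth lam b u - gsmooth lam b v\<bar>
      \<le> (\<Sum>i\<in>UNIV. \<bar>gcomp lam (b$i) (u$i) - gcomp lam (b$i) (v$i)\<bar>)"
    unfolding gsmooth_def by (rule abs_prod_diff_le_sum) (auto simp: gcomp_bounds l)
  also have "\<dots> \<le> (\<Sum>i\<in>(UNIV::'m set). lam * norm (u - v))"
  proof (rule sum_mono)
    fix i :: 'm
    have "\<bar>gcomp lam (b$i) (u$i) - gcomp lam (b$i) (v$i)\<bar> \<le> lam * \<bar>u$i - v$i\<bar>"
      by (rule gcomp_lipschitz[OF l])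
    also have "\<dots> \<le> lam * norm (u - v)"
      using component_le_norm_cart[of "u - v" i] l by (intro mult_left_mono) auto
    finally show "\<bar>gcomp lam (b$i) (u$i) - gcomp lam (b$i) (v$i)\<bar> \<le> lam * norm (u - v)" .
  qed
  also have "\<dots> = (lam * real CARD('m)) * norm (u - v)" by simp
  finally show ?thesis .
qed

lemma abs_indicator_orthant_minus_gsmooth_le:
  fixes b w :: "real^'m::finite"
  assumes l: "lam > 0"
  shows "\<bar>indicator {z. \<forall>i. z$i < b$i} w - gsmooth lam b w\<bar>
         \<le> (\<Sum>i\<in>UNIV. indicator {b$i - 1/lam<..<b$i} (w$i))"
proof -
  have Bnn: "0 \<le> (\<Sum>i\<in>UNIV. indicator {b$i - 1/lam<..<b$i} (w$i) :: real)" by (simp add: sum_nonneg)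
  have il: "0 < 1/lam" using l by simp
  consider "\<forall>i. w$i \<le> b$i - 1/lam" | j where "b$j \<le> w$j"
    | i where "b$i - 1/lam < w$i" "w$i < b$i"
    by (meson not_le)
  then show ?thesis
  proof cases
    case 1
    then have "indicator {z. \<forall>i. z$i < b$i} w = (1::real)"
      using il by (auto simp: indicator_def intro: le_less_trans[of _ "_ - 1/lam"])
    moreover have "gsmooth lam b w = 1" using 1 by (simp add: gsmooth_def gcomp_def)
    ultimately show ?thesis using Bnn by simp
  next
    case 2
    then have "indicator {z. \<forall>i. z$i < b$i} w = (0::real)" by (auto simp: indicator_def not_less)
    moreover have "\<not> w$j \<le> b$j - 1/lam" using 2 il by linarith
    then have "gcomp lam (b$j) (w$j) = 0" using 2 by (simp add: gcomp_def)
    then have "gsmooth lam b w = 0" unfolding gsmooth_def by (intro prod_zero) auto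
    ultimately show ?thesis using Bnn by simp
  next
    case 3
    then have "(1::real) \<le> (\<Sum>i\<in>UNIV. indicator {b$i - 1/lam<..<b$i} (w$i))"
      using member_le_sum[of i UNIV "\<lambda>i. indicator {b$i - 1/lam<..<b$i} (w$i) :: real"] by simp
    moreover have "\<bar>indicator {z. \<forall>i. z$i < b$i} w - gsmooth lam b w\<bar> \<le> 1"
      using gsmooth_bounds[OF l, of b w] by (auto simp: indicator_def)
    ultimately show ?thesis by linarith
  qed
qed

lemma std_normal_density_le_1: "std_normal_density s \<le> 1"
proof -
  have "1 \<le> sqrt (2 * pi)" using pi_gt3 by (intro real_le_rsqrt) simp
  then show ?thesis unfolding std_normal_density_def
    by (intro mult_le_one) simp_all
qed

lemma integrable_dominated_by_std_normal:
  assumes "f \<in> borel_measurable lborel" and "\<And>s. \<bar>f s\<bar> \<le> std_normal_density s"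
  shows "integrable lborel f"
  by (rule Bochner_Integration.integrable_bound[of _ "std_normal_density"]) (use assms in auto)

lemma integral_le_of_nn_integral_le:
  assumes "integrable M f" "\<And>s. 0 \<le> f s"
    and "(\<integral>\<^sup>+s. ennreal (f s) \<partial>M) \<le> ennreal B" "0 \<le> B"
  shows "integral\<^sup>L M f \<le> B"
  using assms nn_integral_eq_integral[of M f] by (simp add: ennreal_le_iff)

lemma integral_std_normal_strip_le:
  assumes a: "a \<noteq> 0" and l: "lam > 0"
  shows "(\<integral>s. indicator {lo<..<lo + 1/lam} (z + s * a) * std_normal_density s \<partial>lborel)
         \<le> 1 / (lam * \<bar>a\<bar>)"
proof (rule integral_le_of_nn_integral_le)
  show "integrable lborel (\<lambda>s. indicator {lo<..<lo + 1/lam} (z + s * a) * std_normal_density s)"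
    by (rule integrable_dominated_by_std_normal) (auto simp: indicator_def)
  have "(\<integral>\<^sup>+s. ennreal (indicator {lo<..<lo + 1/lam} (z + s * a) * std_normal_density s) \<partial>lborel)
     \<le> (\<integral>\<^sup>+s. ennreal (indicator {lo<..<lo + 1/lam} (z + a * s)) \<partial>lborel)"
    by (intro nn_integral_mono) (auto simp: indicator_def std_normal_density_le_1 mult.commute)
  also have "\<dots> = ennreal \<bar>1/a\<bar> *
      (\<integral>\<^sup>+u. ennreal (indicator {lo<..<lo + 1/lam} (z + a * (- z / a + (1/a) * u))) \<partial>lborel)"
    using a by (subst nn_integral_real_affine[where c="1/a" and t="-z/a"]) auto
  also have "(\<integral>\<^sup>+u. ennreal (indicator {lo<..<lo + 1/lam} (z + a * (- z / a + (1/a) * u))) \<partial>lborel)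
      = (\<integral>\<^sup>+u. ennreal (indicator {lo<..<lo + 1/lam} u) \<partial>lborel)"
    using a by (intro nn_integral_cong) (simp add: field_simps)
  also have "\<dots> = ennreal (1/lam)" using l by (simp add: ennreal_indicator)
  finally show "(\<integral>\<^sup>+s. ennreal (indicator {lo<..<lo + 1/lam} (z + s * a) * std_normal_density s) \<partial>lborel)
      \<le> ennreal (1 / (lam * \<bar>a\<bar>))"
    using a l by (simp add: ennreal_mult[symmetric] abs_divide) (simp add: mult.commute)
qed (use l in simp_all)

lemma gauss_kernel_smoothing_error:
  fixes b a x :: "real^'m::finite"
  assumes l: "lam > 0" and anz: "\<And>i. a$i \<noteq> 0"
  shows "\<bar>gauss_kernel a (indicator {z. \<forall>i. z$i < b$i}) x - gauss_kernel a (gsmooth lam b) x\<bar>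
         \<le> real CARD('m) / (lam * Min (range (\<lambda>i. \<bar>a$i\<bar>)))"
proof -
  let ?h = "indicator {z::real^'m. \<forall>i. z$i < b$i} :: real^'m \<Rightarrow> real"
  let ?g = "gsmooth lam b"
  let ?B = "\<lambda>w::real^'m. \<Sum>i\<in>UNIV. indicator {b$i - 1/lam<..<b$i} (w$i) :: real"
  let ?Mn = "Min (range (\<lambda>i. \<bar>a$i\<bar>))"
  have [measurable]: "?h \<in> borel_measurable borel"
    by (simp add: open_halfspace_component_lt_cart)
  have gb: "\<bar>?g z\<bar> \<le> 1" for z using gsmooth_bounds[OF l, of b z] by (auto simp: abs_le_iff)
  have Bb: "\<bar>?B z\<bar> \<le> real CARD('m)" for z
    using sum_mono[of UNIV "\<lambda>i. indicator {b$i - 1/lam<..<b$i} (z$i) :: real" "\<lambda>_. 1"]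
    by (simp add: sum_nonneg indicator_def)
  have hgb: "\<bar>?h z - ?g z\<bar> \<le> 2" for z
    using abs_triangle_ineq4[of "?h z" "?g z"] gb[of z] by (auto simp: indicator_def)
  have "gauss_kernel a ?h x - gauss_kernel a ?g x = gauss_kernel a (\<lambda>w. ?h w - ?g w) x"
    by (rule gauss_kernel_diff[OF _ _ _ gb, where C=1]) (use l in \<open>auto simp: indicator_def\<close>)
  also have "\<bar>\<dots>\<bar> \<le> gauss_kernel a ?B x"
    by (rule abs_gauss_kernel_le_gauss_kernel[OF _ _ hgb Bb abs_indicator_orthant_minus_gsmooth_le[OF l]])
       (use l in measurable)
  also have "\<dots> = (\<Sum>i\<in>UNIV. gauss_kernel a (\<lambda>w. indicator {b$i - 1/lam<..<b$i} (w$i)) x)"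
    by (rule gauss_kernel_sum[where C="\<lambda>_. 1"]) (auto simp: indicator_def)
  also have "\<dots> \<le> (\<Sum>i\<in>(UNIV::'m set). 1 / (lam * ?Mn))"
  proof (rule sum_mono)
    fix i :: 'm
    have "0 < ?Mn" using Min_in[of "range (\<lambda>i. \<bar>a$i\<bar>)"] anz by auto
    moreover have "?Mn \<le> \<bar>a$i\<bar>" by (rule Min_le) auto
    ultimately have "1 / (lam * \<bar>a$i\<bar>) \<le> 1 / (lam * ?Mn)"
      using l by (intro divide_left_mono mult_left_mono mult_pos_pos) auto
    moreover have "gauss_kernel a (\<lambda>w. indicator {b$i - 1/lam<..<b$i} (w$i)) x
        \<le> 1 / (lam * \<bar>a$i\<bar>)"
      using integral_std_normal_strip_le[OF anz l, of "b$i - 1/lam" "x$i"]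
      by (simp add: gauss_kernel_def)
    ultimately show "gauss_kernel a (\<lambda>w. indicator {b$i - 1/lam<..<b$i} (w$i)) x \<le> 1 / (lam * ?Mn)"
      by linarith
  qed
  also have "\<dots> = real CARD('m) / (lam * ?Mn)" by simp
  finally show ?thesis .
qed

lemma gauss_kernel_iter_smoothing_error:
  fixes a :: "nat \<Rightarrow> real^'m::finite" and b :: "real^'m"
  assumes l: "lam > 0" and "n \<ge> 1" and anz: "\<And>i. a (n - 1) $ i \<noteq> 0"
  shows "\<bar>gauss_kernel_iter a 0 n (indicator {z. \<forall>i. z$i < b$i}) x - gauss_kernel_iter a 0 n (gsmooth lam b) x\<bar>
         \<le> real CARD('m) / (lam * Min (range (\<lambda>i. \<bar>a (n - 1) $ i\<bar>)))"
proof -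
  let ?h = "indicator {z::real^'m. \<forall>i. z$i < b$i} :: real^'m \<Rightarrow> real"
  obtain k where n: "n = Suc k" using \<open>n \<ge> 1\<close> by (cases n) auto
  have [measurable]: "?h \<in> borel_measurable borel"
    by (simp add: open_halfspace_component_lt_cart)
  have gb: "\<bar>gsmooth lam b z\<bar> \<le> 1" for z using gsmooth_bounds[OF l, of b z] by (auto simp: abs_le_iff)
  have hb: "\<bar>?h z\<bar> \<le> 1" for z by (simp add: indicator_def)
  show ?thesis
    using gauss_kernel_iter_diff_le[of "gauss_kernel (a k) ?h" "gauss_kernel (a k) (gsmooth lam b)",
        OF _ _ abs_gauss_kernel_le[OF _ hb] abs_gauss_kernel_le[OF _ gb]
        gauss_kernel_smoothing_error[OF l, of "a k"]]
      anz l unfolding n gauss_kernel_iter_Suc_last by simp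
qed

lemma std_normal_density_shift_le:
  assumes "0 \<le> v"
  shows "std_normal_density (r + v) \<le> std_normal_density r * exp (- (r * v))"
proof -
  have "exp (- (r + v)\<^sup>2 / 2) = exp (- r\<^sup>2 / 2) * exp (- (r * v)) * exp (- v\<^sup>2 / 2)"
    by (simp add: exp_add[symmetric] power2_eq_square algebra_simps add_divide_distrib diff_divide_distrib)
  also have "\<dots> \<le> exp (- r\<^sup>2 / 2) * exp (- (r * v))" by simp
  finally show ?thesis unfolding std_normal_density_def by (simp add: divide_right_mono)
qed

lemma nn_integral_std_normal_upper_tail_le:
  assumes r: "r > 0"
  shows "(\<integral>\<^sup>+s. ennreal (indicator {r<..} s * std_normal_density s) \<partial>lborel)
         \<le> ennreal (std_normal_density r / r)"
proof -
  have "(\<integral>\<^sup>+s. ennreal (indicator {r<..} s * std_normal_density s) \<partial>lborel)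
      = (\<integral>\<^sup>+v. ennreal (indicator {r<..} (r + 1 * v) * std_normal_density (r + 1 * v)) \<partial>lborel)"
    by (subst nn_integral_real_affine[where c=1 and t=r]) auto
  also have "\<dots> \<le> (\<integral>\<^sup>+v. ennreal (std_normal_density r) * ennreal (exp (- (r * v)) * indicator {0..} v) \<partial>lborel)"
  proof (rule nn_integral_mono)
    fix v :: real
    show "ennreal (indicator {r<..} (r + 1 * v) * std_normal_density (r + 1 * v))
          \<le> ennreal (std_normal_density r) * ennreal (exp (- (r * v)) * indicator {0..} v)"
      using std_normal_density_shift_le[of v r]
      by (cases "0 < v") (simp_all add: ennreal_mult[symmetric] indicator_def)
  qed
  also have "\<dots> = ennreal (std_normal_density r) * (\<integral>\<^sup>+v. ennreal (exp (- (r * v)) * indicator {0..} v) \<partial>lborel)"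
    by (rule nn_integral_cmult) auto
  also have "(\<integral>\<^sup>+v. ennreal (exp (- (r * v)) * indicator {0..} v) \<partial>lborel)
      = ennreal (1/r) * (\<integral>\<^sup>+v. ennreal (exp (- (r * (0 + (1/r) * v))) * indicator {0..} (0 + (1/r) * v)) \<partial>lborel)"
    using r by (subst nn_integral_real_affine[where c="1/r" and t=0]) auto
  also have "(\<integral>\<^sup>+v. ennreal (exp (- (r * (0 + (1/r) * v))) * indicator {0..} (0 + (1/r) * v)) \<partial>lborel)
      = (\<integral>\<^sup>+x. ennreal (x^0 * exp (-x)) * indicator {0 ..} x \<partial>lborel)"
    using r by (intro nn_integral_cong) (auto simp: indicator_def zero_le_divide_iff)
  also have "\<dots> = 1" by (subst nn_intergal_power_times_exp_Ici) simp
  finally show ?thesis using r by (simp add: ennreal_mult[symmetric] divide_nonneg_pos)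
qed

lemma integral_std_normal_two_sided_tail_le:
  assumes r: "r > 0"
  shows "(\<integral>s. indicator {s. r < \<bar>s\<bar>} s * std_normal_density s \<partial>lborel) \<le> 2 * std_normal_density r / r"
proof (rule integral_le_of_nn_integral_le)
  show "integrable lborel (\<lambda>s. indicator {s. r < \<bar>s\<bar>} s * std_normal_density s)"
    by (rule integrable_dominated_by_std_normal) (auto simp: indicator_def)
  have symm: "(\<integral>\<^sup>+s. ennreal (indicator {..< -r} s * std_normal_density s) \<partial>lborel)
      = (\<integral>\<^sup>+s. ennreal (indicator {r<..} s * std_normal_density s) \<partial>lborel)"
    by (subst nn_integral_real_affine[where c="-1" and t=0])
       (auto intro!: nn_integral_cong simp: indicator_def std_normal_density_def)
  have "(\<integral>\<^sup>+s. ennreal (indicator {s. r < \<bar>s\<bar>} s * std_normal_density s) \<partial>lborel)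
      = (\<integral>\<^sup>+s. ennreal (indicator {r<..} s * std_normal_density s)
              + ennreal (indicator {..< -r} s * std_normal_density s) \<partial>lborel)"
    using r by (intro nn_integral_cong) (auto simp: indicator_def)
  also have "\<dots> = (\<integral>\<^sup>+s. ennreal (indicator {r<..} s * std_normal_density s) \<partial>lborel)
                + (\<integral>\<^sup>+s. ennreal (indicator {..< -r} s * std_normal_density s) \<partial>lborel)"
    by (rule nn_integral_add) auto
  also have "\<dots> \<le> ennreal (std_normal_density r / r) + ennreal (std_normal_density r / r)"
    unfolding symm by (intro add_mono nn_integral_std_normal_upper_tail_le r)
  also have "\<dots> = ennreal (2 * std_normal_density r / r)"
    using r by (simp add: ennreal_plus[symmetric] del: ennreal_plus)
  finally show "(\<integral>\<^sup>+s. ennreal (indicator {s. r < \<bar>s\<bar>} s * std_normal_density s) \<partial>lborel)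
      \<le> ennreal (2 * std_normal_density r / r)" .
qed (use r in simp_all)

lemma beta_partition_center_mem:
  assumes "beta_partition H beta Gam X" and "y \<in> Gam"
  shows "y \<in> H"
proof -
  have "y \<in> X y" and "(\<Union>y\<in>Gam. X y) = H"
    using assms unfolding beta_partition_def by auto
  with assms(2) show ?thesis by blast
qed

lemma proj_preimage_beta_partition:
  assumes bp: "beta_partition H beta Gam X" and y: "y \<in> Gam"
  shows "proj_preimage H Gam X y = X y"
proof -
  have disj: "\<forall>y\<in>Gam. \<forall>z\<in>Gam. y \<noteq> z \<longrightarrow> X y \<inter> X z = {}" and cov: "(\<Union>y\<in>Gam. X y) = H"
    using bp unfolding beta_partition_def by auto
  have proj: "partition_proj Gam X z = y'" if "y' \<in> Gam" "z \<in> X y'" for z y'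
    unfolding partition_proj_def using that disj by (intro the_equality) blast+
  show ?thesis
    unfolding proj_preimage_def using cov y proj by blast
qed

lemma zero_mem_beta_partition_Hbox_0:
  assumes bp: "beta_partition (Hbox lam 0) beta Gam X"
  shows "0 \<in> Gam"
proof -
  have "0 \<in> Hbox lam 0" by (simp add: Hbox_def)
  moreover have "(\<Union>y\<in>Gam. X y) = Hbox lam 0" using bp by (simp add: beta_partition_def)
  ultimately obtain y where y: "y \<in> Gam" by auto
  then have "y \<in> Hbox lam 0" using bp by (rule beta_partition_center_mem[rotated])
  then have "y = 0" by (simp add: Hbox_def vec_eq_iff)
  with y show ?thesis by simp
qed

lemma Hbox_add_step:
  assumes "x \<in> Hbox lam t" and "\<bar>s\<bar> \<le> r" and "\<And>i. r * \<bar>a $ i\<bar> \<le> sqrt (2 * ln lam)"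
  shows "x + s *\<^sub>R a \<in> Hbox lam (Suc t)"
  unfolding Hbox_def
proof (intro CollectI allI)
  fix i
  have "\<bar>x $ i\<bar> \<le> real t * sqrt (2 * ln lam)" using assms(1) by (simp add: Hbox_def)
  moreover have "\<bar>s * a $ i\<bar> \<le> r * \<bar>a $ i\<bar>" using assms(2) by (simp add: abs_mult mult_right_mono)
  ultimately show "\<bar>(x + s *\<^sub>R a) $ i\<bar> \<le> real (Suc t) * sqrt (2 * ln lam)"
    using assms(3)[of i] by (simp add: algebra_simps)
qed

lemma cell_sum_outside:
  assumes "beta_partition H beta Y Cl" and "w \<notin> H"
  shows "(\<Sum>y\<in>Y. j y * indicator (Cl y) w) = (0::real)"
  using assms unfolding beta_partition_def by (intro sum.neutral) (auto simp: indicator_def)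

lemma cell_sum_inside:
  fixes v j :: "real^'m::finite \<Rightarrow> real"
  assumes bp: "beta_partition H beta Y Cl" and "w \<in> H"
    and vl: "\<And>u w. \<bar>v u - v w\<bar> \<le> L * norm (u - w)" and "0 \<le> L"
    and E: "\<forall>y\<in>Y. \<bar>v y - j y\<bar> \<le> E"
  shows "\<bar>v w - (\<Sum>y\<in>Y. j y * indicator (Cl y) w)\<bar> \<le> L * beta + E"
proof -
  have fY: "finite Y" and disj: "\<forall>y\<in>Y. \<forall>y'\<in>Y. y \<noteq> y' \<longrightarrow> Cl y \<inter> Cl y' = {}"
    and cov: "(\<Union>y\<in>Y. Cl y) = H" and diam: "\<forall>y\<in>Y. \<forall>w\<in>Cl y. norm (w - y) \<le> beta"
    using bp unfolding beta_partition_def by auto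
  from cov \<open>w \<in> H\<close> obtain y where y: "y \<in> Y" "w \<in> Cl y" by auto
  have "(\<Sum>y'\<in>Y. j y' * indicator (Cl y') w) = (\<Sum>y'\<in>Y. if y' = y then j y else 0)"
    using disj y by (intro sum.cong) (auto simp: indicator_def)
  also have "\<dots> = j y" using y fY by simp
  finally have "(\<Sum>y'\<in>Y. j y' * indicator (Cl y') w) = j y" .
  moreover have "\<bar>v w - v y\<bar> \<le> L * beta"
    using vl[of w y] mult_left_mono[of "norm (w - y)" beta L] diam y \<open>0 \<le> L\<close> by auto
  moreover have "\<bar>v y - j y\<bar> \<le> E" using E y by auto
  ultimately show ?thesis by linarith
qed

lemma abs_gauss_kernel_le_tail:
  fixes u :: "real^'m::finite \<Rightarrow> real"
  assumes "u \<in> borel_measurable borel" and "\<And>z. \<bar>u z\<bar> \<le> C" and r: "0 < r"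
    and pw: "\<And>s. \<bar>u (x + s *\<^sub>R a)\<bar> \<le> c + indicator {s. r < \<bar>s\<bar>} s"
  shows "\<bar>gauss_kernel a u x\<bar> \<le> c + 2 * std_normal_density r / r"
proof -
  let ?tail = "\<lambda>s. indicator {s. r < \<bar>s\<bar>} s * std_normal_density s :: real"
  have int_tail: "integrable lborel ?tail"
    by (rule integrable_dominated_by_std_normal) (auto simp: indicator_def)
  have "\<bar>gauss_kernel a u x\<bar> \<le> (\<integral>s. c * std_normal_density s + ?tail s \<partial>lborel)"
    unfolding gauss_kernel_def
  proof (rule integral_abs_bound_integral)
    show "integrable lborel (\<lambda>s. u (x + s *\<^sub>R a) * std_normal_density s)"
      using assms(1,2) by (rule integrable_gauss_kernel)
    show "integrable lborel (\<lambda>s. c * std_normal_density s + ?tail s)"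
      using int_tail by simp
    fix s
    have "\<bar>u (x + s *\<^sub>R a) * std_normal_density s\<bar> = \<bar>u (x + s *\<^sub>R a)\<bar> * std_normal_density s"
      by (simp add: abs_mult)
    also have "\<dots> \<le> (c + indicator {s. r < \<bar>s\<bar>} s) * std_normal_density s"
      by (rule mult_right_mono[OF pw]) simp
    finally show "\<bar>u (x + s *\<^sub>R a) * std_normal_density s\<bar> \<le> c * std_normal_density s + ?tail s"
      by (simp add: distrib_right)
  qed
  also have "\<dots> = c + integral\<^sup>L lborel ?tail"
    using int_tail by simp
  also have "\<dots> \<le> c + 2 * std_normal_density r / r"
    using integral_std_normal_two_sided_tail_le[OF r] by simp
  finally show ?thesis .
qed

lemma gauss_kernel_cell_sum_error:
  fixes a x :: "real^'m::finite" and Y H :: "(real^'m) set" and Cl :: "real^'m \<Rightarrow> (real^'m) set"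
    and v j :: "real^'m \<Rightarrow> real"
  assumes bp: "beta_partition H beta Y Cl" and cm: "\<forall>y\<in>Y. Cl y \<in> sets borel"
    and vm: "v \<in> borel_measurable borel" and v01: "\<And>z. 0 \<le> v z \<and> v z \<le> 1"
    and vl: "\<And>u w. \<bar>v u - v w\<bar> \<le> L * norm (u - w)"
    and E: "\<forall>y\<in>Y. \<bar>v y - j y\<bar> \<le> E"
    and nn: "0 \<le> L" "0 \<le> beta" "0 \<le> E" and r: "0 < r"
    and out: "\<And>s. x + s *\<^sub>R a \<notin> H \<Longrightarrow> r < \<bar>s\<bar>"
  shows "\<bar>gauss_kernel a v x - (\<Sum>y\<in>Y. j y * gauss_kernel a (indicator (Cl y)) x)\<bar>
         \<le> L * beta + E + 2 * std_normal_density r / r"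
proof -
  let ?D = "\<lambda>w. \<Sum>y\<in>Y. j y * indicator (Cl y) w :: real"
  have fY: "finite Y" using bp by (simp add: beta_partition_def)
  have im: "(\<lambda>w. j y * indicator (Cl y) w :: real) \<in> borel_measurable borel" if "y \<in> Y" for y
    using cm that by simp
  have Dm: "?D \<in> borel_measurable borel"
    using im by (rule borel_measurable_sum)
  have Db: "\<bar>?D w\<bar> \<le> (\<Sum>y\<in>Y. \<bar>j y\<bar>)" for w
    by (rule order_trans[OF sum_abs]) (intro sum_mono, simp add: indicator_def)
  have vb: "\<bar>v z\<bar> \<le> 1" for z using v01[of z] by (auto simp: abs_le_iff)
  have "gauss_kernel a ?D x = (\<Sum>y\<in>Y. gauss_kernel a (\<lambda>w. j y * indicator (Cl y) w) x)"
    by (rule gauss_kernel_sum[OF fY im, where C="\<lambda>y. \<bar>j y\<bar>"]) (auto simp: indicator_def)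
  then have "(\<Sum>y\<in>Y. j y * gauss_kernel a (indicator (Cl y)) x) = gauss_kernel a ?D x"
    by (simp add: gauss_kernel_cmult)
  then have "gauss_kernel a v x - (\<Sum>y\<in>Y. j y * gauss_kernel a (indicator (Cl y)) x)
      = gauss_kernel a (\<lambda>w. v w - ?D w) x"
    using gauss_kernel_diff[OF vm Dm vb Db] by simp
  also have "\<bar>\<dots>\<bar> \<le> L * beta + E + 2 * std_normal_density r / r"
  proof (rule abs_gauss_kernel_le_tail[OF _ _ r])
    show "(\<lambda>w. v w - ?D w) \<in> borel_measurable borel" using vm Dm by (rule borel_measurable_diff)
    show "\<bar>v w - ?D w\<bar> \<le> 1 + (\<Sum>y\<in>Y. \<bar>j y\<bar>)" for w
      using abs_triangle_ineq4[of "v w" "?D w"] vb[of w] Db[of w] by linarith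
    fix s
    show "\<bar>v (x + s *\<^sub>R a) - ?D (x + s *\<^sub>R a)\<bar> \<le> L * beta + E + indicator {s. r < \<bar>s\<bar>} s"
    proof (cases "x + s *\<^sub>R a \<in> H")
      case True
      have "0 \<le> (indicator {s. r < \<bar>s\<bar>} s :: real)" by simp
      with cell_sum_inside[OF bp True vl nn(1) E] show ?thesis by linarith
    next
      case False
      then show ?thesis
        using cell_sum_outside[OF bp False] out[OF False] vb[of "x + s *\<^sub>R a"] nn(3)
          mult_nonneg_nonneg[OF nn(1,2)] by simp
    qed
  qed
  finally show ?thesis .
qed

lemma gauss_kernel_iter_discretisation_error:
  fixes a :: "nat \<Rightarrow> real^'m::finite" and g :: "real^'m \<Rightarrow> real"
  assumes part: "\<forall>t\<le>T. beta_partition (Hbox lam t) beta (Gam t) (X t)"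
    and meas: "\<forall>t\<le>T. \<forall>y\<in>Gam t. X t y \<in> sets borel"
    and gm: "g \<in> borel_measurable borel" and g01: "\<And>z. 0 \<le> g z \<and> g z \<le> 1"
    and gl: "\<And>u v. \<bar>g u - g v\<bar> \<le> L * norm (u - v)"
    and nn: "0 \<le> L" "0 \<le> beta" and r: "0 < r"
    and a_small: "\<And>t i. t < T \<Longrightarrow> r * \<bar>a t $ i\<bar> \<le> sqrt (2 * ln lam)"
    and J_T: "\<forall>x\<in>Gam T. J T x = g x"
    and J_step: "\<forall>t<T. \<forall>x\<in>Gam t. J t x =
        (\<Sum>y\<in>Gam (Suc t). J (Suc t) y * gauss_kernel (a t) (indicator (X (Suc t) y)) x)"
  shows "\<bar>gauss_kernel_iter a 0 T g 0 - J 0 0\<bar> \<le> real T * (L * beta + 2 * std_normal_density r / r)"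
proof -
  define V where "V t = gauss_kernel_iter a t (T - t) g" for t
  define del where "del = L * beta + 2 * std_normal_density r / r"
  have gb: "\<bar>g z\<bar> \<le> 1" for z using g01[of z] by (auto simp: abs_le_iff)
  have Vm: "V t \<in> borel_measurable borel" for t
    unfolding V_def by (rule gauss_kernel_iter_bounded(1)[OF gm gb])
  have V01: "0 \<le> V t z \<and> V t z \<le> 1" for t z
    using gauss_kernel_iter_bounded(2)[OF gm gb, of a t "T - t" z] g01
      gauss_kernel_iter_nonneg[of g a t "T - t" z]
    by (auto simp: V_def abs_le_iff)
  have Vl: "\<bar>V t u - V t w\<bar> \<le> L * norm (u - w)" for t u w
    unfolding V_def by (rule gauss_kernel_iter_lipschitz[OF gm gb gl])
  have Vstep: "V t = gauss_kernel (a t) (V (Suc t))" if "t < T" for t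
  proof -
    from that have "T - t = Suc (T - Suc t)" by simp
    then show ?thesis by (simp add: V_def)
  qed
  have backward: "\<forall>x\<in>Gam (T - n). \<bar>V (T - n) x - J (T - n) x\<bar> \<le> real n * del" if "n \<le> T" for n
    using that
  proof (induction n)
    case 0
    show ?case using J_T by (simp add: V_def)
  next
    case (Suc n)
    define t where "t = T - Suc n"
    have tT: "t < T" and St: "Suc t = T - n" using Suc.prems by (auto simp: t_def)
    have bp: "beta_partition (Hbox lam (Suc t)) beta (Gam (Suc t)) (X (Suc t))"
      and cm: "\<forall>y\<in>Gam (Suc t). X (Suc t) y \<in> sets borel"
      using part meas St by auto
    have IH: "\<forall>y\<in>Gam (Suc t). \<bar>V (Suc t) y - J (Suc t) y\<bar> \<le> real n * del"
      using Suc St by simp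
    have "0 \<le> real n * del" using nn r by (simp add: del_def)
    note step_error = gauss_kernel_cell_sum_error[OF bp cm Vm V01 Vl IH nn this r]
    show ?case unfolding t_def[symmetric]
    proof
      fix x assume x: "x \<in> Gam t"
      have "x \<in> Hbox lam t"
        using beta_partition_center_mem[of "Hbox lam t" beta "Gam t" "X t" x] part tT x by simp
      then have "r < \<bar>s\<bar>" if "x + s *\<^sub>R a t \<notin> Hbox lam (Suc t)" for s
        using Hbox_add_step[of x lam t s r "a t"] a_small[OF tT] that by force
      moreover have "J t x = (\<Sum>y\<in>Gam (Suc t). J (Suc t) y * gauss_kernel (a t) (indicator (X (Suc t) y)) x)"
        using J_step tT x by blast
      ultimately have "\<bar>V t x - J t x\<bar> \<le> L * beta + real n * del + 2 * std_normal_density r / r"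
        using step_error Vstep[OF tT] by simp
      then show "\<bar>V t x - J t x\<bar> \<le> real (Suc n) * del"
        unfolding of_nat_Suc distrib_right mult_1_left del_def by linarith
    qed
  qed
  have "0 \<in> Gam 0" using zero_mem_beta_partition_Hbox_0[of lam beta "Gam 0" "X 0"] part by simp
  with backward[of T] show ?thesis by (simp add: V_def del_def)
qed

lemma finite_entries: "finite {f i t | i t. t < T}" for f :: "'m::finite \<Rightarrow> nat \<Rightarrow> 'b"
proof (rule finite_subset)
  show "{f i t | i t. t < T} \<subseteq> (\<lambda>p. f (fst p) (snd p)) ` (UNIV \<times> {..<T})" by force
qed simp

lemma entry_bounds:
  fixes A :: "'m::finite \<Rightarrow> nat \<Rightarrow> real"
  assumes "t0 < T" and "A i0 t0 \<noteq> 0"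
  shows "0 < Max {(A i t)\<^sup>2 | i t. t < T}"
    and "sqrt (Max {(A i t)\<^sup>2 | i t. t < T}) \<le> Max {\<bar>A i t\<bar> | i t. t < T}"
    and "t < T \<Longrightarrow> \<bar>A i t\<bar> \<le> sqrt (Max {(A i t)\<^sup>2 | i t. t < T})"
proof -
  let ?M2 = "Max {(A i t)\<^sup>2 | i t. t < T}"
  have ge: "(A i t)\<^sup>2 \<le> ?M2" if "t < T" for i t
    using that by (intro Max_ge finite_entries) blast
  have "0 < (A i0 t0)\<^sup>2" using assms(2) by simp
  then show "0 < ?M2" using ge[OF assms(1), of i0] by linarith
  show "t < T \<Longrightarrow> \<bar>A i t\<bar> \<le> sqrt ?M2"
    using ge real_sqrt_le_mono by fastforce
  have "?M2 \<in> {(A i t)\<^sup>2 | i t. t < T}" using assms(1) by (intro Max_in finite_entries) blast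
  then obtain i t where "t < T" "?M2 = (A i t)\<^sup>2" by blast
  then show "sqrt ?M2 \<le> Max {\<bar>A i t\<bar> | i t. t < T}"
    by (auto intro!: Max_ge finite_entries)
qed

lemma gaussian_tail_weight_le:
  assumes "lam > 1" and "M2 > 0" and "sqrt M2 \<le> Mabs"
  defines "r \<equiv> sqrt (2 * ln lam) / sqrt M2"
  shows "2 * std_normal_density r / r \<le> Mabs / sqrt (ln lam) * (1 / lam) powr (1 / M2)"
proof -
  have ln: "ln lam > 0" using assms(1) by simp
  have "r\<^sup>2 / 2 = (1 / M2) * ln lam"
    using ln assms(2) by (simp add: r_def power_divide)
  then have "exp (- r\<^sup>2 / 2) = (1 / lam) powr (1 / M2)"
    using assms(1) by (simp add: powr_def ln_div)
  moreover have "sqrt (2 * pi) = sqrt 2 * sqrt pi" and "sqrt (2 * ln lam) = sqrt 2 * sqrt (ln lam)"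
    by (simp_all add: real_sqrt_mult)
  ultimately have "2 * std_normal_density r / r
      = sqrt M2 / sqrt pi / sqrt (ln lam) * (1 / lam) powr (1 / M2)"
    using ln assms(2) by (simp add: std_normal_density_def r_def field_simps)
  also have "\<dots> \<le> Mabs / sqrt (ln lam) * (1 / lam) powr (1 / M2)"
  proof (intro mult_right_mono divide_right_mono)
    have "1 \<le> sqrt pi" using pi_gt3 by (simp add: real_le_rsqrt)
    then have "sqrt M2 / sqrt pi \<le> sqrt M2"
      using assms(2) by (simp add: divide_le_eq mult_le_cancel_left1)
    then show "sqrt M2 / sqrt pi \<le> Mabs" using assms(3) by linarith
  qed (use ln in simp_all)
  finally show ?thesis .
qed

lemma error_bound_le_stated_bound:
  fixes m lam Mn beta tau Mabs q P :: real and T :: nat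
  assumes "0 < lam" "0 < Mn" "0 \<le> beta" "1 \<le> m"
    and "tau \<le> Mabs / q * P" "0 \<le> Mabs" "0 < q" "0 \<le> P"
  shows "m / (lam * Mn) + real T * (lam * m * beta + tau)
         \<le> 2 * m / (lam * Mn) + sqrt 2 * m * real T * Mabs / q * P + 2 * m * lam * beta * real (T + 1)"
proof -
  have "m / (lam * Mn) \<le> 2 * m / (lam * Mn)"
    using assms(1,2,4) by (simp add: divide_right_mono)
  moreover have "real T * (lam * m * beta) \<le> 2 * m * lam * beta * real (T + 1)"
    using assms(1,3,4) by (simp add: algebra_simps)
  moreover have "real T * tau \<le> sqrt 2 * m * real T * Mabs / q * P"
  proof -
    have "1 \<le> sqrt 2 * m" using mult_mono[of 1 "sqrt 2" 1 m] assms(4) by simp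
    moreover have "0 \<le> Mabs / q * P" using assms(6-8) by simp
    ultimately have "Mabs / q * P \<le> (sqrt 2 * m) * (Mabs / q * P)"
      using mult_right_mono[of 1 "sqrt 2 * m" "Mabs / q * P"] by simp
    with assms(5) have "real T * tau \<le> real T * ((sqrt 2 * m) * (Mabs / q * P))"
      by (intro mult_left_mono) simp_all
    then show ?thesis by (simp add: algebra_simps)
  qed
  ultimately show ?thesis unfolding distrib_left by linarith
qed

lemma J_step_gauss_kernel:
  assumes part: "\<forall>t\<le>T. beta_partition (Hbox lam t) beta (Gam t) (X t)"
    and J_step: "\<forall>t<T. \<forall>x\<in>Gam t. J t x =
        (\<Sum>y\<in>Gam (Suc t). J (Suc t) y *
           Qker A t (proj_preimage (Hbox lam (Suc t)) (Gam (Suc t)) (X (Suc t)) y) x)"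
  shows "\<forall>t<T. \<forall>x\<in>Gam t. J t x =
        (\<Sum>y\<in>Gam (Suc t). J (Suc t) y * gauss_kernel (column A t) (indicator (X (Suc t) y)) x)"
proof (intro allI impI ballI)
  fix t x assume t: "t < T" and x: "x \<in> Gam t"
  then have "beta_partition (Hbox lam (Suc t)) beta (Gam (Suc t)) (X (Suc t))" using part by simp
  then show "J t x = (\<Sum>y\<in>Gam (Suc t).
      J (Suc t) y * gauss_kernel (column A t) (indicator (X (Suc t) y)) x)"
    using J_step t x by (simp add: Qker_eq_gauss_kernel proj_preimage_beta_partition cong: sum.cong)
qed

theorem corollary4:
  fixes A :: "'m::finite \<Rightarrow> nat \<Rightarrow> real"
    and b :: "real^'m"
    and T :: nat
    and lam beta :: real
    and Gam :: "nat \<Rightarrow> (real^'m) set"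
    and X :: "nat \<Rightarrow> real^'m \<Rightarrow> (real^'m) set"
    and J :: "nat \<Rightarrow> real^'m \<Rightarrow> real"
  assumes T_pos: "T \<ge> 1"
    and aT_nz: "\<forall>i. A i (T - 1) \<noteq> 0"
    and lam: "lam > 1"
    and beta: "beta > 0"
    and part: "\<forall>t\<le>T. beta_partition (Hbox lam t) beta (Gam t) (X t)"
    and meas: "\<forall>t\<le>T. \<forall>y\<in>Gam t. X t y \<in> sets borel"
    and J_T: "\<forall>x\<in>Gam T. J T x = gsmooth lam b x"
    and J_step: "\<forall>t<T. \<forall>x\<in>Gam t. J t x =
        (\<Sum>y\<in>Gam (Suc t). J (Suc t) y *
           Qker A t (proj_preimage (Hbox lam (Suc t)) (Gam (Suc t)) (X (Suc t)) y) x)"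
  shows "\<bar>(\<integral>x. indicator (polyhedron A b T) x * std_normal_density_T T x
                \<partial>(PiM {..<T} (\<lambda>_. lborel))) - J 0 0\<bar>
    \<le> 2 * real CARD('m) / (lam * Min (range (\<lambda>i. \<bar>A i (T - 1)\<bar>)))
      + sqrt 2 * real CARD('m) * real T * Max {\<bar>A i t\<bar> | i t. t < T} / sqrt (ln lam)
          * (1 / lam) powr (1 / Max {(A i t)\<^sup>2 | i t. t < T})
      + 2 * real CARD('m) * lam * beta * real (T + 1)"
proof -
  let ?m = "real CARD('m)" and ?g = "gsmooth lam b"
  let ?h = "indicator {z::real^'m. \<forall>i. z $ i < b $ i} :: real^'m \<Rightarrow> real"
  define Mn where "Mn = Min (range (\<lambda>i. \<bar>A i (T - 1)\<bar>))"
  define M2 where "M2 = Max {(A i t)\<^sup>2 | i t. t < T}"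
  define Mabs where "Mabs = Max {\<bar>A i t\<bar> | i t. t < T}"
  define r where "r = sqrt (2 * ln lam) / sqrt M2"
  have l0: "lam > 0" and ln: "ln lam > 0" using lam by simp_all
  have "T - 1 < T" using T_pos by simp
  note M2 = entry_bounds[where A=A and T=T, OF this aT_nz[rule_format], folded M2_def Mabs_def]
  have r: "0 < r" using ln M2(1) by (simp add: r_def)
  have Mabs: "0 \<le> Mabs" using M2(1,2) real_sqrt_ge_zero[of M2] by linarith
  have Mn: "0 < Mn"
    unfolding Mn_def using Min_in[of "range (\<lambda>i. \<bar>A i (T - 1)\<bar>)"] aT_nz by auto
  have smoothing: "\<bar>gauss_kernel_iter (column A) 0 T ?h 0 - gauss_kernel_iter (column A) 0 T ?g 0\<bar>
      \<le> ?m / (lam * Mn)"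
    using gauss_kernel_iter_smoothing_error[OF l0 T_pos, of "column A" b 0] aT_nz
    by (simp add: Mn_def column_def)
  have "r * \<bar>column A t $ i\<bar> \<le> sqrt (2 * ln lam)" if "t < T" for t i
    using mult_left_mono[OF M2(3)[OF that, of i], of r] r M2(1) by (simp add: r_def column_def)
  then have discretisation: "\<bar>gauss_kernel_iter (column A) 0 T ?g 0 - J 0 0\<bar>
      \<le> real T * (lam * ?m * beta + 2 * std_normal_density r / r)"
    using gauss_kernel_iter_discretisation_error[OF part meas borel_measurable_gsmooth[OF l0]
        gsmooth_bounds[OF l0] gsmooth_lipschitz[OF l0] _ _ r] J_step_gauss_kernel[OF part J_step]
      J_T l0 beta by simp
  have "\<bar>(\<integral>x. indicator (polyhedron A b T) x * std_normal_density_T T x \<partial>PiM {..<T} (\<lambda>_. lborel))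
      - J 0 0\<bar> \<le> ?m / (lam * Mn) + real T * (lam * ?m * beta + 2 * std_normal_density r / r)"
    using smoothing discretisation unfolding polyhedron_integral_eq_gauss_kernel_iter by linarith
  also have "\<dots> \<le> 2 * ?m / (lam * Mn) + sqrt 2 * ?m * real T * Mabs / sqrt (ln lam)
      * (1 / lam) powr (1 / M2) + 2 * ?m * lam * beta * real (T + 1)"
    using gaussian_tail_weight_le[OF lam M2(1,2), folded r_def] Mabs ln l0 Mn beta
    by (intro error_bound_le_stated_bound) simp_all
  finally show ?thesis unfolding Mn_def M2_def Mabs_def .
qed

end
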